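(* For every $k\in\mathbb{N}$, $$L_{\mathbb{R},4k}\ge\left[\sum_{j=0}^{2k}\binom{4k}{2j}\left|\frac{B_j}{\binom{4k}{2j}}\right|^{\frac{8k}{4k+1}}\right]^{\frac{4k+1}{8k}},$$ where $$B_j=\sum_{\ell=0}^{\lfloor j/2\rfloor}\frac{k!\,(-3)^{j-2\ell}}{\ell!\,(j-2\ell)!\,(k-j+\ell)!},\qquad j=0,\dots,2k$$ (terms with $k-j+\ell<0$ being $0$); the $B_j$ are the coefficients of $x^{2j}y^{4k-2j}$ in $(x^4+y^4-3x^2y^2)^k$.
   Context: All spaces are real. $\check P$ is the polar of an $m$-homogeneous polynomial $P$ (the unique symmetric $m$-linear form with $\check P(x,\dots,x)=P(x)$). For $x_1,\dots,x_N$ in a Banach space $X$, $\|(x_j)\|_{w,1}=\sup\{\sum_j|\varphi(x_j)|:\varphi\in X',\|\varphi\|\le1\}$. $L_{\mathbb{R},m}$ is the smallest constant $L$ such that for every real Banach space $X$, every continuous $m$-homogeneous $P:X\to\mathbb{R}$, every $N$ and all $x^{(k)}_j\in X$: $\big(\sum_{j_1,\dots,j_m=1}^N|\check P(x^{(1)}_{j_1},\dots,x^{(m)}_{j_m})|^{\frac{2m}{m+1}}\big)^{\frac{m+1}{2m}}\le L\|P\|\prod_{k=1}^m\|(x^{(k)}_j)_{j=1}^N\|_{w,1}$. $\lfloor h\rfloor$ is the integer part. *)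

theory Defs
  imports "HOL-Analysis.Analysis"
begin

lemma nat_real_dist_lt1: "\<bar>real (a::nat) - real b\<bar> < 1 \<Longrightarrow> a = b"
proof (rule ccontr)
  assume h: "\<bar>real a - real b\<bar> < 1" "a \<noteq> b"
  then have "a + 1 \<le> b \<or> b + 1 \<le> a" by arith
  then have "real a + 1 \<le> real b \<or> real b + 1 \<le> real a"
    by (metis of_nat_1 of_nat_add of_nat_le_iff)
  then show False using h(1) by linarith
qed

text \<open>The usual (discrete) metric on nat, so that nat =>C real is the space
  l-infinity of bounded real sequences.\<close>
instantiation nat :: metric_space
begin
definition dist_nat :: "nat \<Rightarrow> nat \<Rightarrow> real" where
  "dist_nat m n = \<bar>real m - real n\<bar>"
definition uniformity_nat :: "(nat \<times> nat) filter" where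
  "uniformity_nat = (INF e\<in>{0 <..}. principal {(x, y). dist x y < e})"
instance
proof
  fix U :: "nat set"
  have "eventually (\<lambda>(x', y). x' = x \<longrightarrow> y \<in> U) (uniformity::(nat\<times>nat) filter)"
    if "x \<in> U" for x
  proof -
    have "eventually (\<lambda>(a, b). dist a b < (1::real)) (uniformity::(nat\<times>nat) filter)"
      unfolding uniformity_nat_def
      by (rule eventually_INF1[of 1]) (auto simp: eventually_principal)
    then show ?thesis
      by (rule eventually_mono) (use that nat_real_dist_lt1 in \<open>fastforce simp: dist_nat_def\<close>)
  qed
  then show "open U \<longleftrightarrow> (\<forall>x\<in>U. eventually (\<lambda>(x', y). x' = x \<longrightarrow> y \<in> U) uniformity)"
    by (simp add: open_discrete)
qed (auto simp: dist_nat_def uniformity_nat_def)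
end

instance bcontfun :: (metric_space, banach) banach ..

text \<open>An m-linear form on a real vector space: a function of an argument tuple
  (indexed by 0..<m, represented as nat => 'a), linear in each argument and
  independent of the coordinates >= m.\<close>
definition mlinear :: "nat \<Rightarrow> ((nat \<Rightarrow> 'a::real_vector) \<Rightarrow> real) \<Rightarrow> bool" where
  "mlinear m A \<longleftrightarrow>
     (\<forall>v w. (\<forall>i<m. v i = w i) \<longrightarrow> A v = A w) \<and>
     (\<forall>i<m. \<forall>v. linear (\<lambda>y. A (v(i := y))))"

definition sym_mlinear :: "nat \<Rightarrow> ((nat \<Rightarrow> 'a::real_vector) \<Rightarrow> real) \<Rightarrow> bool" where
  "sym_mlinear m A \<longleftrightarrow> mlinear m A \<and>
     (\<forall>\<sigma> v. \<sigma> permutes {..<m} \<longrightarrow> A (v \<circ> \<sigma>) = A v)"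

definition homog_poly :: "nat \<Rightarrow> ('a::real_vector \<Rightarrow> real) \<Rightarrow> bool" where
  "homog_poly m P \<longleftrightarrow> (\<exists>A. mlinear m A \<and> (\<forall>x. P x = A (\<lambda>_. x)))"

definition polar :: "nat \<Rightarrow> ('a::real_vector \<Rightarrow> real) \<Rightarrow> (nat \<Rightarrow> 'a) \<Rightarrow> real" where
  "polar m P = (THE A. sym_mlinear m A \<and> (\<forall>x. A (\<lambda>_. x) = P x))"

definition poly_norm :: "('a::real_normed_vector \<Rightarrow> real) \<Rightarrow> real" where
  "poly_norm P = Sup {\<bar>P x\<bar> | x. norm x \<le> 1}"

definition weak1_norm :: "nat \<Rightarrow> (nat \<Rightarrow> 'a::real_normed_vector) \<Rightarrow> real" where
  "weak1_norm N x = Sup {(\<Sum>j<N. \<bar>\<phi> (x j)\<bar>) | \<phi>::'a \<Rightarrow> real. bounded_linear \<phi> \<and> onorm \<phi> \<le> 1}"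

definition BH_holds :: "'a::banach itself \<Rightarrow> nat \<Rightarrow> real \<Rightarrow> bool" where
  "BH_holds (_::'a itself) m L \<longleftrightarrow>
     (\<forall>(P::'a \<Rightarrow> real) N (x::nat \<Rightarrow> nat \<Rightarrow> 'a).
        homog_poly m P \<and> continuous_on UNIV P \<longrightarrow>
        (\<Sum>j\<in>PiE {..<m} (\<lambda>_. {..<N}).
            \<bar>polar m P (\<lambda>i. x i (j i))\<bar> powr (2 * real m / (real m + 1)))
          powr ((real m + 1) / (2 * real m))
        \<le> L * poly_norm P * (\<Prod>i<m. weak1_norm N (x i)))"

definition Bcoef :: "nat \<Rightarrow> nat \<Rightarrow> real" where
  "Bcoef k j = (\<Sum>l\<le>j div 2.
      if j \<le> k + l
      then fact k * (-3) ^ (j - 2 * l) / (fact l * fact (j - 2 * l) * fact (k + l - j))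
      else 0)"

end

theory Submission
  imports Defs "HOL-Computational_Algebra.Polynomial"
begin

(* Idea: test the inequality with the 4k-homogeneous polynomial
     P(f) = (f(0)^4 + f(1)^4 - 3 f(0)^2 f(1)^2)^k,
   the unit vectors e_0, e_1 of l_infinity and N = 2.  Since |P| <= 1 on the unit
   ball and the weak 1-norm of (e_0, e_1) is at most 1, the inequality gives
   "left-hand side <= L".  The polar of P evaluated at unit vectors only depends
   on the number r of slots filled with e_0; its value there is the coefficient
   of f(0)^r f(1)^(4k-r) divided by binom(4k, r), which is B_{r/2}/binom(4k,r)
   for even r and 0 for odd r.  Counting the words with r zeros gives the sum
   in the statement. *)

section \<open>Polarization\<close>

lemma mlinear_cong: "mlinear m A \<Longrightarrow> (\<And>i. i < m \<Longrightarrow> v i = w i) \<Longrightarrow> A v = A w"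
  unfolding mlinear_def by blast

lemma mlinear_linear_slot: "mlinear m A \<Longrightarrow> i < m \<Longrightarrow> linear (\<lambda>y. A (v(i := y)))"
  unfolding mlinear_def by blast

lemma mlinear_line_poly:
  fixes D :: "(nat \<Rightarrow> 'a::real_vector) \<Rightarrow> real"
  assumes D: "mlinear m D"
  shows "n \<le> m \<Longrightarrow> \<exists>p. (\<forall>t. D (\<lambda>i. if i < n then x + t *\<^sub>R y else w i) = poly p t) \<and>
      coeff p 0 = D (\<lambda>i. if i < n then x else w i) \<and>
      coeff p 1 = (\<Sum>j<n. D (\<lambda>i. if i < n then (if i = j then y else x) else w i))"
proof (induction n arbitrary: w)
  case 0
  show ?case by (rule exI[of _ "[:D w:]"]) simp
next
  case (Suc n)
  have nm: "n < m" "n \<le> m" using Suc.prems by auto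
  obtain px where px: "\<forall>t. D (\<lambda>i. if i < n then x + t *\<^sub>R y else (w(n := x)) i) = poly px t"
    "coeff px 0 = D (\<lambda>i. if i < n then x else (w(n := x)) i)"
    "coeff px 1 = (\<Sum>j<n. D (\<lambda>i. if i < n then (if i = j then y else x) else (w(n := x)) i))"
    using Suc.IH[OF nm(2), of "w(n := x)"] by blast
  obtain py where py: "\<forall>t. D (\<lambda>i. if i < n then x + t *\<^sub>R y else (w(n := y)) i) = poly py t"
    "coeff py 0 = D (\<lambda>i. if i < n then x else (w(n := y)) i)"
    using Suc.IH[OF nm(2), of "w(n := y)"] by blast
  show ?case
  proof (rule exI[of _ "px + pCons 0 py"], intro conjI allI)
    fix t
    define u where "u = (\<lambda>i. if i < n then x + t *\<^sub>R y else w i)"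
    have lin: "linear (\<lambda>z. D (u(n := z)))" by (rule mlinear_linear_slot[OF D nm(1)])
    have "D (u(n := x + t *\<^sub>R y)) = D (u(n := x)) + t * D (u(n := y))"
      using real_vector.linear_add[OF lin] real_vector.linear_scale[OF lin] by simp
    moreover have "(\<lambda>i. if i < Suc n then x + t *\<^sub>R y else w i) = u(n := x + t *\<^sub>R y)"
      "u(n := x) = (\<lambda>i. if i < n then x + t *\<^sub>R y else (w(n := x)) i)"
      "u(n := y) = (\<lambda>i. if i < n then x + t *\<^sub>R y else (w(n := y)) i)"
      by (auto simp: u_def)
    ultimately show "D (\<lambda>i. if i < Suc n then x + t *\<^sub>R y else w i) = poly (px + pCons 0 py) t"
      using px(1) py(1) by simp
  next
    have "(\<lambda>i. if i < n then x else (w(n := x)) i) = (\<lambda>i. if i < Suc n then x else w i)"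
      by auto
    then show "coeff (px + pCons 0 py) 0 = D (\<lambda>i. if i < Suc n then x else w i)"
      using px(2) by simp
  next
    have "(\<lambda>i. if i < n then (if i = j then y else x) else (w(n := x)) i) =
          (\<lambda>i. if i < Suc n then (if i = j then y else x) else w i)" if "j < n" for j
      using that by auto
    moreover have "(\<lambda>i. if i < n then x else (w(n := y)) i) =
          (\<lambda>i. if i < Suc n then (if i = n then y else x) else w i)"
      by auto
    ultimately show "coeff (px + pCons 0 py) 1 =
        (\<Sum>j<Suc n. D (\<lambda>i. if i < Suc n then (if i = j then y else x) else w i))"
      using px(3) py(2) by (simp add: coeff_pCons)
  qed
qed

lemma sym_mlinear_freeze_last:
  fixes D :: "(nat \<Rightarrow> 'a::real_vector) \<Rightarrow> real"
  assumes "sym_mlinear (Suc m) D"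
  shows "sym_mlinear m (\<lambda>u. D (u(m := y)))"
proof -
  have D: "mlinear (Suc m) D" and Dsym: "\<And>\<sigma> v. \<sigma> permutes {..<Suc m} \<Longrightarrow> D (v \<circ> \<sigma>) = D v"
    using assms unfolding sym_mlinear_def by auto
  have "mlinear m (\<lambda>u. D (u(m := y)))"
    unfolding mlinear_def
  proof (intro conjI allI impI)
    fix u w :: "nat \<Rightarrow> 'a" assume uw: "\<forall>i<m. u i = w i"
    show "D (u(m := y)) = D (w(m := y))" by (rule mlinear_cong[OF D]) (use uw in auto)
  next
    fix i u assume "i < m"
    then have "(u(i := z))(m := y) = (u(m := y))(i := z)" for z
      by (auto simp: fun_eq_iff)
    then have "(\<lambda>z. D ((u(i := z))(m := y))) = (\<lambda>z. D ((u(m := y))(i := z)))"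
      by simp
    then show "linear (\<lambda>z. D ((u(i := z))(m := y)))"
      using \<open>i < m\<close> by (simp add: mlinear_linear_slot[OF D])
  qed
  moreover have "D ((u \<circ> \<sigma>)(m := y)) = D (u(m := y))" if \<sigma>: "\<sigma> permutes {..<m}" for \<sigma> u
  proof -
    have \<sigma>m: "\<sigma> m = m" by (rule permutes_not_in[OF \<sigma>]) simp
    have "(u \<circ> \<sigma>)(m := y) = (u(m := y)) \<circ> \<sigma>"
    proof
      fix i show "((u \<circ> \<sigma>)(m := y)) i = ((u(m := y)) \<circ> \<sigma>) i"
      proof (cases "i = m")
        case False
        then have "\<sigma> i \<noteq> m" using \<sigma>m permutes_inj[OF \<sigma>] by (metis injD)
        then show ?thesis using False by simp
      qed (simp add: \<sigma>m)
    qed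
    then show ?thesis using Dsym[OF permutes_subset[OF \<sigma>]] by auto
  qed
  ultimately show ?thesis unfolding sym_mlinear_def by blast
qed

text \<open>If a symmetric (m+1)-linear form vanishes on the diagonal, so does its
  "derivative" (x, ..., x, y): it is 1/(m+1) times the linear coefficient of the
  vanishing polynomial t \<mapsto> D(x + t y, ..., x + t y).\<close>

lemma sym_mlinear_diag_zero_derivative:
  fixes D :: "(nat \<Rightarrow> 'a::real_vector) \<Rightarrow> real"
  assumes S: "sym_mlinear (Suc m) D" and Z: "\<And>x. D (\<lambda>_. x) = 0"
  shows "D ((\<lambda>_. x)(m := y)) = 0"
proof -
  have D: "mlinear (Suc m) D" and Dsym: "\<And>\<sigma> v. \<sigma> permutes {..<Suc m} \<Longrightarrow> D (v \<circ> \<sigma>) = D v"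
    using S unfolding sym_mlinear_def by auto
  let ?w = "\<lambda>_. x"
  obtain p where p: "\<forall>t. D (\<lambda>i. if i < Suc m then x + t *\<^sub>R y else ?w i) = poly p t"
    "coeff p 1 = (\<Sum>j<Suc m. D (\<lambda>i. if i < Suc m then (if i = j then y else x) else ?w i))"
    using mlinear_line_poly[OF D, of "Suc m" x y ?w] by auto
  have "D (\<lambda>i. if i < Suc m then x + t *\<^sub>R y else ?w i) = D (\<lambda>_. x + t *\<^sub>R y)" for t
    by (rule mlinear_cong[OF D]) auto
  then have "\<forall>t. poly p t = 0" using p(1) Z by simp
  then have "p = 0" using poly_all_0_iff_0 by blast
  have slot: "D (\<lambda>i. if i < Suc m then (if i = j then y else x) else ?w i) = D (?w(m := y))"
    if "j < Suc m" for j
  proof -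
    let ?u = "\<lambda>i. if i < Suc m then (if i = m then y else x) else x"
    have t: "Transposition.transpose j m permutes {..<Suc m}"
      using that by (intro permutes_swap_id) auto
    have "(\<lambda>i. if i < Suc m then (if i = j then y else x) else ?w i) = ?u \<circ> Transposition.transpose j m"
      using that by (auto simp: fun_eq_iff Transposition.transpose_def)
    then have "D (\<lambda>i. if i < Suc m then (if i = j then y else x) else ?w i) = D ?u"
      using Dsym[OF t] by simp
    also have "\<dots> = D (?w(m := y))" by (rule mlinear_cong[OF D]) auto
    finally show ?thesis .
  qed
  have "0 = (\<Sum>j<Suc m. D (?w(m := y)))" using p(2) \<open>p = 0\<close> slot by simp
  then show ?thesis by simp
qed

lemma sym_mlinear_diag_zero:
  fixes D :: "(nat \<Rightarrow> 'a::real_vector) \<Rightarrow> real"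
  shows "sym_mlinear m D \<Longrightarrow> (\<And>x. D (\<lambda>_. x) = 0) \<Longrightarrow> D v = 0"
proof (induction m arbitrary: D v)
  case 0
  then have "mlinear 0 D" by (simp add: sym_mlinear_def)
  then have "D v = D (\<lambda>_. 0)" by (rule mlinear_cong) simp
  then show ?case using "0.prems"(2) by simp
next
  case (Suc m)
  let ?E = "\<lambda>u. D (u(m := v m))"
  have "sym_mlinear m ?E" by (rule sym_mlinear_freeze_last[OF Suc.prems(1)])
  moreover have "?E (\<lambda>_. x) = 0" for x
    by (rule sym_mlinear_diag_zero_derivative[OF Suc.prems(1)]) (rule Suc.prems(2))
  ultimately have "?E v = 0" by (rule Suc.IH[of ?E])
  then show ?case by simp
qed

lemma polar_eqI:
  fixes A :: "(nat \<Rightarrow> 'a::real_vector) \<Rightarrow> real"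
  assumes A: "sym_mlinear m A" and P: "\<And>x. A (\<lambda>_. x) = P x"
  shows "polar m P = A"
  unfolding polar_def
proof (rule the_equality)
  show "sym_mlinear m A \<and> (\<forall>x. A (\<lambda>_. x) = P x)" using A P by auto
next
  fix B assume B: "sym_mlinear m B \<and> (\<forall>x. B (\<lambda>_. x) = P x)"
  have mA: "mlinear m A" and mB: "mlinear m B" using A B unfolding sym_mlinear_def by auto
  have "mlinear m (\<lambda>v. B v - A v)" unfolding mlinear_def
  proof (intro conjI allI impI)
    fix v w :: "nat \<Rightarrow> 'a" assume "\<forall>i<m. v i = w i"
    then show "B v - A v = B w - A w"
      using mlinear_cong[OF mA, of v w] mlinear_cong[OF mB, of v w] by simp
  next
    fix i v assume "i < m"
    show "linear (\<lambda>y. B (v(i := y)) - A (v(i := y)))"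
      by (intro real_vector.module_hom_sub mlinear_linear_slot[OF mB \<open>i < m\<close>]
          mlinear_linear_slot[OF mA \<open>i < m\<close>])
  qed
  then have "sym_mlinear m (\<lambda>v. B v - A v)" using A B unfolding sym_mlinear_def by auto
  then have "B v - A v = 0" for v
    by (rule sym_mlinear_diag_zero) (use B P in auto)
  then show "B = A" by auto
qed


section \<open>The coefficients B_j\<close>

text \<open>Expanding (s^2 + t(t - 3s))^k twice by the binomial theorem.\<close>

lemma trinomial_double_expansion:
  fixes s t :: real
  shows "(s^2 + t^2 - 3 * s * t) ^ k =
    (\<Sum>(l, c)\<in>Sigma {..k} (\<lambda>l. {..k - l}).
       real (k choose l) * real ((k - l) choose c) * (-3) ^ c * s ^ (2*l + c) * t ^ (2*k - 2*l - c))"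
proof -
  define T where "T = (\<lambda>(l, c). real (k choose l) * real ((k - l) choose c) * (-3) ^ c *
      s ^ (2*l + c) * t ^ (2*k - 2*l - c))"
  have "(s^2 + t^2 - 3 * s * t) ^ k = (s^2 + t * (-3 * s + t)) ^ k"
    by (simp add: algebra_simps power2_eq_square)
  also have "\<dots> = (\<Sum>l\<le>k. real (k choose l) * (s^2)^l * (t * (-3 * s + t)) ^ (k - l))"
    by (rule binomial_ring)
  also have "\<dots> = (\<Sum>l\<le>k. \<Sum>c\<le>k - l. T (l, c))"
  proof (rule sum.cong[OF refl])
    fix l assume l: "l \<in> {..k}"
    have "(t * (-3 * s + t)) ^ (k - l) =
        t ^ (k - l) * (\<Sum>c\<le>k - l. real ((k - l) choose c) * (-3 * s)^c * t ^ (k - l - c))"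
      unfolding power_mult_distrib binomial_ring[of "-3 * s" t] ..
    then have "real (k choose l) * (s^2)^l * (t * (-3 * s + t)) ^ (k - l) =
        (\<Sum>c\<le>k - l. real (k choose l) * (s^2)^l * t ^ (k - l) *
          (real ((k - l) choose c) * (-3 * s)^c * t ^ (k - l - c)))"
      by (simp add: sum_distrib_left mult.assoc)
    also have "\<dots> = (\<Sum>c\<le>k - l. T (l, c))"
    proof (rule sum.cong[OF refl])
      fix c assume c: "c \<in> {..k - l}"
      have s_pow: "(s^2)^l * s^c = s ^ (2*l + c)" by (simp add: power_mult power_add)
      have "k - l + (k - l - c) = 2*k - 2*l - c" using c l by auto
      then have t_pow: "t ^ (k - l) * t ^ (k - l - c) = t ^ (2*k - 2*l - c)" by (metis power_add)
      have "real (k choose l) * (s^2)^l * t ^ (k - l) *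
          (real ((k - l) choose c) * (-3 * s)^c * t ^ (k - l - c)) =
          real (k choose l) * real ((k - l) choose c) * (-3)^c *
          ((s^2)^l * s^c) * (t ^ (k - l) * t ^ (k - l - c))"
        unfolding power_mult_distrib[of "-3" s] by (simp only: mult_ac)
      then show "real (k choose l) * (s^2)^l * t ^ (k - l) *
          (real ((k - l) choose c) * (-3 * s)^c * t ^ (k - l - c)) = T (l, c)"
        unfolding T_def s_pow t_pow by simp
    qed
    finally show "real (k choose l) * (s^2)^l * (t * (-3 * s + t)) ^ (k - l) =
        (\<Sum>c\<le>k - l. T (l, c))" .
  qed
  also have "\<dots> = sum T (Sigma {..k} (\<lambda>l. {..k - l}))"
    by (subst sum.Sigma) auto
  finally show ?thesis unfolding T_def .
qed

text \<open>Grouping by the total power j = 2l + c of s identifies B_j as the coefficient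
  of s^j t^(2k-j); with s = x^2, t = y^2 this is the coefficient of x^(2j) y^(4k-2j)
  in (x^4 + y^4 - 3x^2y^2)^k.\<close>

lemma Bcoef_identity:
  fixes s t :: real
  shows "(s^2 + t^2 - 3 * s * t) ^ k = (\<Sum>j = 0..2*k. Bcoef k j * s ^ j * t ^ (2*k - j))"
proof -
  define T where "T = (\<lambda>(j, l). fact k * (-3) ^ (j - 2 * l) /
      (fact l * fact (j - 2 * l) * fact (k + l - j)) * s ^ j * t ^ (2*k - j) :: real)"
  define I where "I = {x \<in> Sigma {0..2*k} (\<lambda>j. {..j div 2}). case x of (j, l) \<Rightarrow> j \<le> k + l}"
  have "(s^2 + t^2 - 3 * s * t) ^ k = sum T I"
    unfolding trinomial_double_expansion
  proof (rule sum.reindex_bij_witness[where i = "\<lambda>(j, l). (l, j - 2*l)" and j = "\<lambda>(l, c). (2*l + c, l)"])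
    fix a assume "a \<in> Sigma {..k} (\<lambda>l. {..k - l})"
    then obtain l c where a: "a = (l, c)" "l \<le> k" "c \<le> k - l" by auto
    show "(case (case a of (l, c) \<Rightarrow> (2 * l + c, l)) of (j, l) \<Rightarrow> (l, j - 2 * l)) = a"
      using a by simp
    show "(case a of (l, c) \<Rightarrow> (2 * l + c, l)) \<in> I" using a by (auto simp: I_def)
    have binom: "fact k / (fact l * fact c * fact (k - l - c)) = real (k choose l) * real ((k - l) choose c)"
      using a by (simp add: binomial_fact fact_reduce field_simps)
    have "k + l - (2 * l + c) = k - l - c" by simp
    then have "T (2 * l + c, l) = fact k / (fact l * fact c * fact (k - l - c)) *
        ((-3) ^ c * s ^ (2 * l + c) * t ^ (2 * k - 2 * l - c))"
      unfolding T_def by simp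
    then show "T (case a of (l, c) \<Rightarrow> (2 * l + c, l)) = (case a of (l, c) \<Rightarrow>
        real (k choose l) * real ((k - l) choose c) * (-3) ^ c * s ^ (2*l + c) * t ^ (2*k - 2*l - c))"
      unfolding a(1) binom by (simp add: mult_ac)
  next
    fix b assume "b \<in> I"
    then obtain j l where b: "b = (j, l)" "j \<le> 2*k" "l \<le> j div 2" "j \<le> k + l"
      by (auto simp: I_def)
    show "(case (case b of (j, l) \<Rightarrow> (l, j - 2 * l)) of (l, c) \<Rightarrow> (2 * l + c, l)) = b"
      using b by auto
    show "(case b of (j, l) \<Rightarrow> (l, j - 2 * l)) \<in> Sigma {..k} (\<lambda>l. {..k - l})" using b by auto
  qed
  also have "\<dots> = (\<Sum>x\<in>Sigma {0..2*k} (\<lambda>j. {..j div 2}).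
      if (case x of (j, l) \<Rightarrow> j \<le> k + l) then T x else 0)"
    unfolding I_def by (rule sum.inter_filter) auto
  also have "\<dots> = (\<Sum>j = 0..2*k. \<Sum>l\<le>j div 2. if j \<le> k + l then T (j, l) else 0)"
    by (subst sum.Sigma) (auto intro!: sum.cong)
  also have "\<dots> = (\<Sum>j = 0..2*k. Bcoef k j * s ^ j * t ^ (2*k - j))"
    unfolding Bcoef_def T_def by (auto simp: sum_distrib_right intro!: sum.cong)
  finally show ?thesis .
qed

text \<open>B_0 = 1 (the coefficient of t^(2k)), which makes the bound positive.\<close>

lemma Bcoef_0: "Bcoef k 0 = 1"
  unfolding Bcoef_def by simp


section \<open>Binary words counted by their number of zeros\<close>

text \<open>Words of length m over {0, 1}, i.e. the index tuples of the Bohnenblust--Hille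
  sum for N = 2.\<close>

abbreviation binary_words :: "nat \<Rightarrow> (nat \<Rightarrow> nat) set" where
  "binary_words m \<equiv> PiE {..<m} (\<lambda>_. {..<2})"

definition zeros :: "nat \<Rightarrow> (nat \<Rightarrow> nat) \<Rightarrow> nat" where
  "zeros m g = card {i \<in> {..<m}. g i = 0}"

lemma zeros_le: "zeros m g \<le> m"
  unfolding zeros_def by (rule order_trans[OF card_mono card_lessThan[THEN eq_imp_le]]) auto

text \<open>A binary word is determined by its set of zero positions, so exactly
  binom(m, r) words have r zeros.\<close>

lemma card_words_with_zeros: "card {g \<in> binary_words m. zeros m g = r} = m choose r"
proof -
  define word where "word = (\<lambda>S i. if i < m then (if i \<in> S then 0 else 1) else undefined :: nat)"
  have "bij_betw (\<lambda>g. {i \<in> {..<m}. g i = 0}) {g \<in> binary_words m. zeros m g = r}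
     {S. S \<subseteq> {..<m} \<and> card S = r}"
  proof (rule bij_betw_byWitness[where f' = word])
    show "\<forall>g\<in>{g \<in> binary_words m. zeros m g = r}. word {i \<in> {..<m}. g i = 0} = g"
    proof (intro ballI ext)
      fix g i assume g: "g \<in> {g \<in> binary_words m. zeros m g = r}"
      show "word {i \<in> {..<m}. g i = 0} i = g i"
      proof (cases "i < m")
        case True
        then have "g i < 2" using g by (auto simp: PiE_iff)
        then show ?thesis using True unfolding word_def by auto
      next
        case False
        then show ?thesis using g PiE_arb[of g "{..<m}" _ i] unfolding word_def by auto
      qed
    qed
    show "\<forall>S\<in>{S. S \<subseteq> {..<m} \<and> card S = r}. {i \<in> {..<m}. word S i = 0} = S"
      unfolding word_def by auto
    show "(\<lambda>g. {i \<in> {..<m}. g i = 0}) ` {g \<in> binary_words m. zeros m g = r} \<subseteq>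
        {S. S \<subseteq> {..<m} \<and> card S = r}"
      unfolding zeros_def by auto
    show "word ` {S. S \<subseteq> {..<m} \<and> card S = r} \<subseteq> {g \<in> binary_words m. zeros m g = r}"
    proof
      fix g assume "g \<in> word ` {S. S \<subseteq> {..<m} \<and> card S = r}"
      then obtain S where S: "S \<subseteq> {..<m}" "card S = r" "g = word S" by auto
      then have "{i \<in> {..<m}. g i = 0} = S" "g \<in> binary_words m"
        unfolding word_def by (auto simp: PiE_iff extensional_def)
      then show "g \<in> {g \<in> binary_words m. zeros m g = r}" using S unfolding zeros_def by auto
    qed
  qed
  then have "card {g \<in> binary_words m. zeros m g = r} = card {S. S \<subseteq> {..<m} \<and> card S = r}"
    by (rule bij_betw_same_card)
  also have "\<dots> = m choose r" by (subst n_subsets) auto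
  finally show ?thesis .
qed

lemma sum_words_by_zeros:
  fixes h :: "nat \<Rightarrow> real"
  shows "(\<Sum>g\<in>binary_words m. h (zeros m g)) = (\<Sum>r\<le>m. real (m choose r) * h r)"
proof -
  have "(\<Sum>g\<in>binary_words m. h (zeros m g)) =
      (\<Sum>r\<le>m. \<Sum>g\<in>{g \<in> binary_words m. zeros m g = r}. h (zeros m g))"
    using zeros_le by (intro sum.group[symmetric]) (auto intro: finite_PiE)
  also have "\<dots> = (\<Sum>r\<le>m. \<Sum>g\<in>{g \<in> binary_words m. zeros m g = r}. h r)"
    by (intro sum.cong) auto
  also have "\<dots> = (\<Sum>r\<le>m. real (m choose r) * h r)"
    by (simp add: card_words_with_zeros)
  finally show ?thesis .
qed

lemma prod_along_word:
  fixes f :: "nat \<Rightarrow> real"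
  assumes g: "g \<in> binary_words m"
  shows "(\<Prod>i<m. f (g i)) = f 0 ^ zeros m g * f 1 ^ (m - zeros m g)"
proof -
  have "(\<Prod>i<m. f (g i)) = (\<Prod>i<m. if g i = 0 then f 0 else f 1)"
  proof (rule prod.cong[OF refl])
    fix i assume "i \<in> {..<m}"
    then have "g i < 2" using g by (auto simp: PiE_iff)
    then show "f (g i) = (if g i = 0 then f 0 else f 1)" by (cases "g i") auto
  qed
  also have "\<dots> = f 0 ^ card ({..<m} \<inter> {i. g i = 0}) * f 1 ^ card ({..<m} \<inter> - {i. g i = 0})"
    by (simp add: prod.If_cases)
  also have "card ({..<m} \<inter> {i. g i = 0}) = zeros m g"
    unfolding zeros_def by (rule arg_cong[where f = card]) auto
  also have "card ({..<m} \<inter> - {i. g i = 0}) = m - zeros m g"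
  proof -
    have "{..<m} \<inter> - {i. g i = 0} = {..<m} - {i \<in> {..<m}. g i = 0}" by auto
    moreover have "card ({..<m} - {i \<in> {..<m}. g i = 0}) = m - zeros m g"
      unfolding zeros_def by (subst card_Diff_subset) auto
    ultimately show ?thesis by simp
  qed
  finally show ?thesis .
qed

lemma zeros_permute:
  assumes \<tau>: "\<tau> permutes {..<m}"
  shows "zeros m (g \<circ> \<tau>) = zeros m g"
proof -
  have "\<tau> ` {i \<in> {..<m}. g (\<tau> i) = 0} = {l \<in> {..<m}. g l = 0}"
  proof
    show "\<tau> ` {i \<in> {..<m}. g (\<tau> i) = 0} \<subseteq> {l \<in> {..<m}. g l = 0}"
      using permutes_in_image[OF \<tau>] by auto
    show "{l \<in> {..<m}. g l = 0} \<subseteq> \<tau> ` {i \<in> {..<m}. g (\<tau> i) = 0}"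
    proof
      fix l assume l: "l \<in> {l \<in> {..<m}. g l = 0}"
      have "inv \<tau> l \<in> {..<m}" using l permutes_in_image[OF permutes_inv[OF \<tau>]] by auto
      moreover have "\<tau> (inv \<tau> l) = l" using permutes_inverses(1)[OF \<tau>] by simp
      ultimately show "l \<in> \<tau> ` {i \<in> {..<m}. g (\<tau> i) = 0}" using l
        by (intro image_eqI[where x = "inv \<tau> l"]) auto
    qed
  qed
  moreover have "inj_on \<tau> {i \<in> {..<m}. g (\<tau> i) = 0}"
    using permutes_inj[OF \<tau>] by (auto simp: inj_on_def inj_def)
  ultimately show ?thesis unfolding zeros_def using card_image by fastforce
qed

lemma PiE_permute:
  assumes \<tau>: "\<tau> permutes {..<m}" and g: "g \<in> PiE {..<m} (\<lambda>_. B)"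
  shows "g \<circ> \<tau> \<in> PiE {..<m} (\<lambda>_. B)"
proof -
  have "(g \<circ> \<tau>) i \<in> B" if "i < m" for i
    using g permutes_in_image[OF \<tau>] that by (auto simp: PiE_iff)
  moreover have "(g \<circ> \<tau>) i = undefined" if "\<not> i < m" for i
    using g permutes_not_in[OF \<tau>] that PiE_arb[OF g, of i] by auto
  ultimately show ?thesis by (auto simp: PiE_iff extensional_def)
qed

lemma sum_even_terms:
  fixes F :: "nat \<Rightarrow> real"
  assumes "\<And>r. odd r \<Longrightarrow> F r = 0"
  shows "(\<Sum>r\<le>2*n. F r) = (\<Sum>j=0..n. F (2*j))"
proof -
  have "(\<Sum>j=0..n. F (2*j)) = sum F ((\<lambda>j. 2*j) ` {0..n})"
    by (subst sum.reindex) (auto simp: inj_on_def)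
  also have "\<dots> = (\<Sum>r\<le>2*n. F r)"
  proof (rule sum.mono_neutral_left)
    show "\<forall>i\<in>{..2 * n} - (\<lambda>j. 2*j) ` {0..n}. F i = 0"
    proof
      fix i assume i: "i \<in> {..2 * n} - (\<lambda>j. 2*j) ` {0..n}"
      then have "odd i" by (auto elim!: evenE)
      then show "F i = 0" by (rule assms)
    qed
  qed auto
  finally show ?thesis ..
qed


section \<open>Symmetric forms on l-infinity depending on two coordinates\<close>

text \<open>The m-linear form on l-infinity (nat =>C real) that reads coordinate 0 or 1 in
  each slot, weighting the reading pattern g by c (number of zeros of g).\<close>

definition pair_form :: "nat \<Rightarrow> (nat \<Rightarrow> real) \<Rightarrow> (nat \<Rightarrow> (nat \<Rightarrow>\<^sub>C real)) \<Rightarrow> real" where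
  "pair_form m c v = (\<Sum>g\<in>binary_words m. c (zeros m g) * (\<Prod>i<m. apply_bcontfun (v i) (g i)))"

lemma pair_form_slot:
  assumes "i < m"
  shows "pair_form m c (v(i := y)) = (\<Sum>g\<in>binary_words m.
     (c (zeros m g) * (\<Prod>l\<in>{..<m} - {i}. apply_bcontfun (v l) (g l))) * apply_bcontfun y (g i))"
  unfolding pair_form_def
proof (rule sum.cong[OF refl])
  fix g
  have "(\<Prod>l<m. apply_bcontfun ((v(i := y)) l) (g l)) =
      apply_bcontfun y (g i) * (\<Prod>l\<in>{..<m} - {i}. apply_bcontfun ((v(i := y)) l) (g l))"
    using assms by (subst prod.remove[of _ i]) auto
  also have "(\<Prod>l\<in>{..<m} - {i}. apply_bcontfun ((v(i := y)) l) (g l)) =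
      (\<Prod>l\<in>{..<m} - {i}. apply_bcontfun (v l) (g l))"
    by (rule prod.cong) auto
  finally show "c (zeros m g) * (\<Prod>l<m. apply_bcontfun ((v(i := y)) l) (g l)) =
      c (zeros m g) * (\<Prod>l\<in>{..<m} - {i}. apply_bcontfun (v l) (g l)) * apply_bcontfun y (g i)"
    by (simp add: mult_ac)
qed

lemma linear_weighted_evaluations:
  "linear (\<lambda>y :: nat \<Rightarrow>\<^sub>C real. \<Sum>g\<in>G. a g * apply_bcontfun y (h g))"
proof (rule linearI)
  fix y z :: "nat \<Rightarrow>\<^sub>C real" and r :: real
  show "(\<Sum>g\<in>G. a g * apply_bcontfun (y + z) (h g)) =
      (\<Sum>g\<in>G. a g * apply_bcontfun y (h g)) + (\<Sum>g\<in>G. a g * apply_bcontfun z (h g))"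
    by (simp add: distrib_left sum.distrib)
  show "(\<Sum>g\<in>G. a g * apply_bcontfun (r *\<^sub>R y) (h g)) = r *\<^sub>R (\<Sum>g\<in>G. a g * apply_bcontfun y (h g))"
    by (simp add: sum_distrib_left mult_ac)
qed

text \<open>The pair form is symmetric m-linear: linear in every slot by the slot
  decomposition, and invariant under permuting slots (reindex words by the same
  permutation).\<close>

lemma pair_form_mlinear: "mlinear m (pair_form m c)"
  unfolding mlinear_def
proof (intro conjI allI impI)
  fix v w :: "nat \<Rightarrow> (nat \<Rightarrow>\<^sub>C real)" assume "\<forall>i<m. v i = w i"
  then show "pair_form m c v = pair_form m c w"
    unfolding pair_form_def by (intro sum.cong refl arg_cong[where f = "\<lambda>x. _ * x"] prod.cong) auto
next
  fix i v assume i: "i < m"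
  show "linear (\<lambda>y. pair_form m c (v(i := y)))"
    unfolding pair_form_slot[OF i] by (rule linear_weighted_evaluations)
qed

lemma pair_form_permute:
  assumes \<sigma>: "\<sigma> permutes {..<m}"
  shows "pair_form m c (v \<circ> \<sigma>) = pair_form m c v"
  unfolding pair_form_def
proof (rule sum.reindex_bij_witness[where i = "\<lambda>g. g \<circ> \<sigma>" and j = "\<lambda>g. g \<circ> inv \<sigma>"])
  have inv: "inv \<sigma> permutes {..<m}" by (rule permutes_inv[OF \<sigma>])
  fix a assume a: "a \<in> binary_words m"
  show "a \<circ> inv \<sigma> \<circ> \<sigma> = a" using permutes_inverses(2)[OF \<sigma>] by (auto simp: fun_eq_iff)
  show "a \<circ> inv \<sigma> \<in> binary_words m" by (rule PiE_permute[OF inv a])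
  have "(\<Prod>i<m. apply_bcontfun ((v \<circ> \<sigma>) i) (a i)) =
      (\<Prod>i<m. ((\<lambda>l. apply_bcontfun (v l) ((a \<circ> inv \<sigma>) l)) \<circ> \<sigma>) i)"
    using permutes_inverses(2)[OF \<sigma>] by simp
  also have "\<dots> = (\<Prod>l<m. apply_bcontfun (v l) ((a \<circ> inv \<sigma>) l))"
    by (rule prod.permute[OF \<sigma>, symmetric])
  finally show "c (zeros m (a \<circ> inv \<sigma>)) * (\<Prod>i<m. apply_bcontfun (v i) ((a \<circ> inv \<sigma>) i)) =
        c (zeros m a) * (\<Prod>i<m. apply_bcontfun ((v \<circ> \<sigma>) i) (a i))"
    using zeros_permute[OF inv] by simp
next
  fix b assume b: "b \<in> binary_words m"
  show "b \<circ> \<sigma> \<circ> inv \<sigma> = b" using permutes_inverses(1)[OF \<sigma>] by (auto simp: fun_eq_iff)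
  show "b \<circ> \<sigma> \<in> binary_words m" by (rule PiE_permute[OF \<sigma> b])
qed

lemma pair_form_sym_mlinear: "sym_mlinear m (pair_form m c)"
  unfolding sym_mlinear_def using pair_form_mlinear pair_form_permute by blast

lemma pair_form_diagonal:
  "pair_form m c (\<lambda>_. f) =
    (\<Sum>r\<le>m. real (m choose r) * (c r * (apply_bcontfun f 0 ^ r * apply_bcontfun f 1 ^ (m - r))))"
proof -
  have "pair_form m c (\<lambda>_. f) = (\<Sum>g\<in>binary_words m.
      (\<lambda>r. c r * (apply_bcontfun f 0 ^ r * apply_bcontfun f 1 ^ (m - r))) (zeros m g))"
    unfolding pair_form_def by (rule sum.cong[OF refl]) (simp add: prod_along_word)
  also have "\<dots> = (\<Sum>r\<le>m. real (m choose r) * (c r * (apply_bcontfun f 0 ^ r * apply_bcontfun f 1 ^ (m - r))))"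
    by (rule sum_words_by_zeros)
  finally show ?thesis .
qed

lemma pair_form_at_word:
  assumes J: "J \<in> binary_words m"
    and v: "\<And>i l. i < m \<Longrightarrow> apply_bcontfun (v i) l = (if l = J i then 1 else 0)"
  shows "pair_form m c v = c (zeros m J)"
proof -
  have "pair_form m c v = (\<Sum>g\<in>binary_words m. if g = J then c (zeros m g) else 0)"
    unfolding pair_form_def
  proof (rule sum.cong[OF refl])
    fix g assume g: "g \<in> binary_words m"
    show "c (zeros m g) * (\<Prod>i<m. apply_bcontfun (v i) (g i)) = (if g = J then c (zeros m g) else 0)"
    proof (cases "g = J")
      case False
      then obtain i where i: "i \<in> {..<m}" "g i \<noteq> J i" using PiE_ext[OF g J] by blast
      then have "(\<Prod>i<m. apply_bcontfun (v i) (g i)) = 0"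
        using v by (intro prod_zero[OF finite_lessThan]) (auto intro!: bexI[of _ i])
      then show ?thesis using False by simp
    qed (use v in simp)
  qed
  also have "\<dots> = c (zeros m J)"
    using J by (simp add: sum.delta[OF finite_PiE])
  finally show ?thesis .
qed


section \<open>Norm estimates\<close>

lemma Sup_between:
  fixes S :: "real set"
  assumes "a \<in> S" "0 \<le> a" "\<And>s. s \<in> S \<Longrightarrow> s \<le> b"
  shows "0 \<le> Sup S" "Sup S \<le> b"
proof -
  show "0 \<le> Sup S"
    using assms by (intro order_trans[OF _ cSup_upper[of a]] bdd_aboveI[of _ b]) auto
  show "Sup S \<le> b" using assms by (intro cSup_least) auto
qed

lemma poly_norm_le:
  fixes P :: "'a::real_normed_vector \<Rightarrow> real"
  assumes "\<And>x. norm x \<le> 1 \<Longrightarrow> \<bar>P x\<bar> \<le> b"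
  shows "0 \<le> poly_norm P" "poly_norm P \<le> b"
  unfolding poly_norm_def using assms by (intro Sup_between[of "\<bar>P 0\<bar>"]; auto)+

text \<open>Each functional of norm at most 1 gives a sum bounded by the sum of the norms,
  and the zero functional gives 0.\<close>

lemma weak1_norm_nonneg:
  fixes x :: "nat \<Rightarrow> 'a::real_normed_vector"
  shows "0 \<le> weak1_norm N x"
  unfolding weak1_norm_def
proof (rule Sup_between(1))
  show "(\<Sum>j<N. \<bar>(\<lambda>_. 0::real) (x j)\<bar>) \<in>
      {(\<Sum>j<N. \<bar>\<phi> (x j)\<bar>) | \<phi>. bounded_linear \<phi> \<and> onorm \<phi> \<le> 1}"
    by (rule CollectI, rule exI[of _ "\<lambda>_. 0"]) (simp add: onorm_zero)
  fix s :: real assume "s \<in> {(\<Sum>j<N. \<bar>\<phi> (x j)\<bar>) | \<phi>. bounded_linear \<phi> \<and> onorm \<phi> \<le> 1}"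
  then obtain \<phi> :: "'a \<Rightarrow> real" where \<phi>: "s = (\<Sum>j<N. \<bar>\<phi> (x j)\<bar>)" "bounded_linear \<phi>" "onorm \<phi> \<le> 1" by blast
  have "\<bar>\<phi> (x j)\<bar> \<le> norm (x j)" for j
  proof -
    have "\<bar>\<phi> (x j)\<bar> \<le> onorm \<phi> * norm (x j)" using onorm[OF \<phi>(2)] by simp
    also have "\<dots> \<le> norm (x j)" using mult_right_mono[OF \<phi>(3) norm_ge_zero] by simp
    finally show ?thesis .
  qed
  then show "s \<le> (\<Sum>j<N. norm (x j))" unfolding \<phi>(1) by (rule sum_mono)
qed simp

definition unit_seq :: "nat \<Rightarrow> (nat \<Rightarrow>\<^sub>C real)" where
  "unit_seq a = Bcontfun (\<lambda>l. if l = a then 1 else 0)"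

lemma unit_seq_apply: "apply_bcontfun (unit_seq a) l = (if l = a then 1 else 0)"
proof -
  have "(\<lambda>l::nat. if l = a then 1 else (0::real)) \<in> bcontfun"
    by (rule bcontfun_normI) (auto intro: continuous_on_discrete)
  then show ?thesis unfolding unit_seq_def by (simp add: Bcontfun_inverse)
qed

lemma apply_bcontfun_sum:
  "apply_bcontfun (\<Sum>j\<in>A. f j) l = (\<Sum>j\<in>A. apply_bcontfun (f j) l)"
  by (induction A rule: infinite_finite_induct) auto

text \<open>The weak 1-norm of e_0, ..., e_(N-1) is at most 1: for a functional phi, the sum
  of the |phi(e_j)| is phi applied to the signed sum of the e_j, a vector of sup norm
  at most 1.\<close>

lemma weak1_norm_unit_seq: "weak1_norm N unit_seq \<le> 1"
  unfolding weak1_norm_def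
proof (rule Sup_between(2))
  show "(\<Sum>j<N. \<bar>(\<lambda>_. 0::real) (unit_seq j)\<bar>) \<in>
      {(\<Sum>j<N. \<bar>\<phi> (unit_seq j)\<bar>) | \<phi>. bounded_linear \<phi> \<and> onorm \<phi> \<le> 1}"
    by (rule CollectI, rule exI[of _ "\<lambda>_. 0"]) (simp add: onorm_zero)
  fix s :: real assume "s \<in> {(\<Sum>j<N. \<bar>\<phi> (unit_seq j)\<bar>) | \<phi>. bounded_linear \<phi> \<and> onorm \<phi> \<le> 1}"
  then obtain \<phi> :: "(nat \<Rightarrow>\<^sub>C real) \<Rightarrow> real"
    where \<phi>: "s = (\<Sum>j<N. \<bar>\<phi> (unit_seq j)\<bar>)" "bounded_linear \<phi>" "onorm \<phi> \<le> 1"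
    by blast
  define z where "z = (\<Sum>j<N. sgn (\<phi> (unit_seq j)) *\<^sub>R unit_seq j)"
  have lin: "linear \<phi>" using \<phi>(2) by (rule bounded_linear.linear)
  have "\<phi> z = (\<Sum>j<N. sgn (\<phi> (unit_seq j)) * \<phi> (unit_seq j))"
    unfolding z_def real_vector.linear_sum[OF lin] real_vector.linear_scale[OF lin] by simp
  also have "\<dots> = s" unfolding \<phi>(1) by (intro sum.cong) (auto simp: sgn_if)
  finally have s: "s = \<phi> z" ..
  have "apply_bcontfun z l = (\<Sum>j<N. if l = j then sgn (\<phi> (unit_seq l)) else 0)" for l
    unfolding z_def apply_bcontfun_sum by (intro sum.cong) (auto simp: unit_seq_apply)
  then have "\<bar>apply_bcontfun z l\<bar> \<le> 1" for l by (simp add: sgn_if)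
  then have "norm z \<le> 1" by (intro norm_bound) simp
  then have "onorm \<phi> * norm z \<le> 1 * 1"
    using \<phi>(3) onorm_pos_le[OF \<phi>(2)] by (intro mult_mono) auto
  then have "\<bar>\<phi> z\<bar> \<le> 1" using onorm[OF \<phi>(2), of z] by simp
  then show "s \<le> 1" using s by simp
qed simp

lemma continuous_on_coordinate: "continuous_on UNIV (\<lambda>f::nat \<Rightarrow>\<^sub>C real. apply_bcontfun f n)"
proof (rule linear_continuous_on, rule bounded_linear_intro[where K = 1])
  fix f :: "nat \<Rightarrow>\<^sub>C real"
  show "norm (apply_bcontfun f n) \<le> norm f * 1" using norm_bounded[of f n] by simp
qed simp_all

lemma quadratic_form_bound:
  fixes s t :: real
  assumes "0 \<le> s" "s \<le> 1" "0 \<le> t" "t \<le> 1"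
  shows "\<bar>s^2 + t^2 - 3 * s * t\<bar> \<le> 1"
proof -
  have "s^2 + t^2 - 3 * s * t = (s - t)^2 - s * t"
    by (simp add: power2_eq_square algebra_simps)
  moreover have "0 \<le> (s - t)^2" "(s - t)^2 \<le> 1" using assms by (simp_all add: abs_square_le_1)
  moreover have "0 \<le> s * t" "s * t \<le> 1" using assms by (simp_all add: mult_le_one)
  ultimately show ?thesis unfolding abs_le_iff by linarith
qed


section \<open>The test polynomial\<close>

text \<open>The coefficient of the pair form realising (x^4 + y^4 - 3x^2y^2)^k: the coefficient
  of x^r y^(4k-r) divided by binom(4k, r), i.e. B_(r/2)/binom(4k, r) for even r.\<close>

definition test_coef :: "nat \<Rightarrow> nat \<Rightarrow> real" where
  "test_coef k r = (if even r then Bcoef k (r div 2) else 0) / real (4*k choose r)"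

definition test_poly :: "nat \<Rightarrow> (nat \<Rightarrow>\<^sub>C real) \<Rightarrow> real" where
  "test_poly k f = pair_form (4*k) (test_coef k) (\<lambda>_. f)"

lemma test_poly_closed_form:
  fixes f :: "nat \<Rightarrow>\<^sub>C real"
  defines "a \<equiv> apply_bcontfun f 0" and "b \<equiv> apply_bcontfun f 1"
  shows "test_poly k f = ((a^2)^2 + (b^2)^2 - 3 * a^2 * b^2) ^ k"
proof -
  have "test_poly k f = (\<Sum>r\<le>2*(2*k). real (4*k choose r) * (test_coef k r * (a ^ r * b ^ (4*k - r))))"
    unfolding test_poly_def pair_form_diagonal a_def b_def by simp
  also have "\<dots> = (\<Sum>r\<le>2*(2*k). (if even r then Bcoef k (r div 2) else 0) * (a ^ r * b ^ (4*k - r)))"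
    by (intro sum.cong) (auto simp: test_coef_def)
  also have "\<dots> = (\<Sum>j=0..2*k. Bcoef k j * (a^2) ^ j * (b^2) ^ (2*k - j))"
  proof (subst sum_even_terms, simp, rule sum.cong[OF refl])
    fix j assume "j \<in> {0..2*k}"
    then have "4*k - 2*j = 2 * (2*k - j)" by auto
    then show "(if even (2*j) then Bcoef k (2*j div 2) else 0) * (a ^ (2*j) * b ^ (4*k - 2*j)) =
        Bcoef k j * (a^2) ^ j * (b^2) ^ (2*k - j)"
      by (simp add: power_mult)
  qed
  also have "\<dots> = ((a^2)^2 + (b^2)^2 - 3 * a^2 * b^2) ^ k"
    by (rule Bcoef_identity[symmetric])
  finally show ?thesis .
qed

text \<open>On the unit ball x^2, y^2 lie in [0, 1], so |P| <= 1 there.\<close>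

lemma test_poly_bounded:
  assumes "norm f \<le> 1"
  shows "\<bar>test_poly k f\<bar> \<le> 1"
proof -
  let ?s = "(apply_bcontfun f 0)^2" and ?t = "(apply_bcontfun f 1)^2"
  have "\<bar>apply_bcontfun f l\<bar> \<le> 1" for l using norm_bounded[of f l] assms by simp
  then have "0 \<le> ?s" "?s \<le> 1" "0 \<le> ?t" "?t \<le> 1" by (simp_all add: abs_square_le_1)
  then have "\<bar>?s^2 + ?t^2 - 3 * ?s * ?t\<bar> \<le> 1" by (rule quadratic_form_bound)
  then have "\<bar>?s^2 + ?t^2 - 3 * ?s * ?t\<bar> ^ k \<le> 1" by (simp add: power_le_one)
  then show ?thesis by (simp add: test_poly_closed_form power_abs)
qed

lemma test_poly_homog: "homog_poly (4*k) (test_poly k)"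
  unfolding homog_poly_def test_poly_def using pair_form_mlinear by blast

lemma test_poly_continuous: "continuous_on UNIV (test_poly k)"
  unfolding test_poly_def pair_form_diagonal by (intro continuous_intros continuous_on_coordinate)

lemma test_poly_polar: "polar (4*k) (test_poly k) = pair_form (4*k) (test_coef k)"
  by (rule polar_eqI[OF pair_form_sym_mlinear]) (simp add: test_poly_def)

text \<open>The left-hand side of the inequality for the test polynomial and the unit
  vectors e_0, e_1, before taking the outer root.\<close>

lemma test_polar_at_unit_words:
  "(\<Sum>J\<in>binary_words (4*k). \<bar>pair_form (4*k) (test_coef k) (\<lambda>i. unit_seq (J i))\<bar> powr p) =
   (\<Sum>j = 0..2*k. real (4*k choose (2*j)) * \<bar>Bcoef k j / real (4*k choose (2*j))\<bar> powr p)"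
proof -
  have "(\<Sum>J\<in>binary_words (4*k). \<bar>pair_form (4*k) (test_coef k) (\<lambda>i. unit_seq (J i))\<bar> powr p) =
      (\<Sum>J\<in>binary_words (4*k). \<bar>test_coef k (zeros (4*k) J)\<bar> powr p)"
    by (intro sum.cong refl) (simp add: pair_form_at_word unit_seq_apply)
  also have "\<dots> = (\<Sum>r\<le>2*(2*k). real (4*k choose r) * \<bar>test_coef k r\<bar> powr p)"
    using sum_words_by_zeros[of "\<lambda>r. \<bar>test_coef k r\<bar> powr p" "4*k"] by simp
  also have "\<dots> = (\<Sum>j=0..2*k. real (4*k choose (2*j)) * \<bar>test_coef k (2*j)\<bar> powr p)"
    by (rule sum_even_terms) (simp add: test_coef_def)
  finally show ?thesis by (simp add: test_coef_def)
qed

text \<open>The j = 0 term equals 1, so the sum in the bound is at least 1.\<close>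

lemma test_sum_ge_1:
  "1 \<le> (\<Sum>j = 0..2*k. real (4*k choose (2*j)) * \<bar>Bcoef k j / real (4*k choose (2*j))\<bar> powr p)"
proof -
  have "(\<lambda>j. real (4*k choose (2*j)) * \<bar>Bcoef k j / real (4*k choose (2*j))\<bar> powr p) 0 \<le>
      (\<Sum>j = 0..2*k. real (4*k choose (2*j)) * \<bar>Bcoef k j / real (4*k choose (2*j))\<bar> powr p)"
    by (rule member_le_sum) auto
  then show ?thesis by (simp add: Bcoef_0)
qed

lemma BH_lower_bound:
  fixes P :: "'a::banach \<Rightarrow> real" and x :: "nat \<Rightarrow> nat \<Rightarrow> 'a" and m N :: nat
  defines "S \<equiv> (\<Sum>j\<in>PiE {..<m} (\<lambda>_. {..<N}).
      \<bar>polar m P (\<lambda>i. x i (j i))\<bar> powr (2 * real m / (real m + 1))) powr ((real m + 1) / (2 * real m))"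
  assumes BH: "BH_holds TYPE('a) m L"
    and P: "homog_poly m P" "continuous_on UNIV P" "\<And>y. norm y \<le> 1 \<Longrightarrow> \<bar>P y\<bar> \<le> 1"
    and x: "\<And>i. weak1_norm N (x i) \<le> 1"
    and pos: "0 < S"
  shows "S \<le> L"
proof -
  define w where "w = poly_norm P * (\<Prod>i<m. weak1_norm N (x i))"
  have "S \<le> L * w" using BH P(1,2) unfolding BH_holds_def S_def w_def by (simp add: mult.assoc)
  moreover have "0 \<le> w" "w \<le> 1"
    unfolding w_def using poly_norm_le[OF P(3)] x weak1_norm_nonneg
    by (auto intro!: mult_nonneg_nonneg mult_le_one prod_nonneg prod_le_1)
  ultimately have "0 < L * w" using pos by linarith
  then have "0 < L" using \<open>0 \<le> w\<close> by (auto simp: zero_less_mult_iff)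
  then have "L * w \<le> L" using \<open>w \<le> 1\<close> by (simp add: mult_left_le)
  with \<open>S \<le> L * w\<close> show ?thesis by simp
qed

theorem mainTheorem6:
  fixes k :: nat and L :: real
  assumes "k \<ge> 1"
    and "BH_holds TYPE(nat \<Rightarrow>\<^sub>C real) (4 * k) L"
  shows "L \<ge> (\<Sum>j = 0..2 * k. real (4 * k choose (2 * j)) *
            \<bar>Bcoef k j / real (4 * k choose (2 * j))\<bar> powr (8 * real k / (4 * real k + 1)))
          powr ((4 * real k + 1) / (8 * real k))"
proof -
  have exponents: "2 * real (4*k) / (real (4*k) + 1) = 8 * real k / (4 * real k + 1)"
      "(real (4*k) + 1) / (2 * real (4*k)) = (4 * real k + 1) / (8 * real k)"
    by simp_all
  have "(\<Sum>J\<in>binary_words (4*k). \<bar>polar (4*k) (test_poly k) (\<lambda>i. unit_seq (J i))\<bar>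
          powr (2 * real (4*k) / (real (4*k) + 1))) powr ((real (4*k) + 1) / (2 * real (4*k)))
      \<le> L"
  proof (rule BH_lower_bound[OF assms(2) test_poly_homog test_poly_continuous test_poly_bounded
        weak1_norm_unit_seq])
    show "0 < (\<Sum>J\<in>binary_words (4*k). \<bar>polar (4*k) (test_poly k) (\<lambda>i. unit_seq (J i))\<bar>
          powr (2 * real (4*k) / (real (4*k) + 1))) powr ((real (4*k) + 1) / (2 * real (4*k)))"
      (is "0 < ?X powr _")
    proof -
      have "1 \<le> ?X" unfolding test_poly_polar test_polar_at_unit_words by (rule test_sum_ge_1)
      then have "?X \<noteq> 0" by linarith
      then show ?thesis by simp
    qed
  qed
  then show ?thesis unfolding test_poly_polar test_polar_at_unit_words exponents .
qed

end
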